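(* Let $\Psi\in\mathcal{L}PSH^*(\mathbb{C}^n)$ be an indicator, let $\psi(t)=\Psi(e^{t_1},\ldots,e^{t_n})$, and suppose that $\psi^+=\max\{\psi,0\}$ is the supporting function of a lower set. Then \[ \inf\{\psi^+(t):\ t\in H_1\}=\inf\{\psi^+(t):\ t\in\Sigma_{\mathbf 1}\}. \]
   Context: $\mathcal{L}PSH^*(\mathbb{C}^n)$: plurisubharmonic functions $u$ on $\mathbb{C}^n$ with $\limsup_{|z|\to\infty}u(z)/\log|z|<\infty$ and $u(z)\to+\infty$ as $|z|\to\infty$. An indicator is a plurisubharmonic $\Psi$ with $\Psi(z)=\Psi(|z_1|,\ldots,|z_n|)$ and $\Psi(|z_1|^c,\ldots,|z_n|^c)=c\Psi(z)$ for all $c>0$. The supporting function of $\Gamma$ is $h_\Gamma(t)=\sup\{\langle a,t\rangle:a\in\Gamma\}$. A compact convex set $\Gamma\subset\overline{\mathbb{R}}_+^n$ (closed nonnegative orthant) is a lower set if $a\in\Gamma$ implies $b\in\Gamma$ for every $b$ with $0<b_k<a_k$ for all $k$. $H_1=\{t\in\mathbb{R}^n:\sum_kt_k=1\}$ and $\Sigma_{\mathbf 1}=\{b\in\overline{\mathbb{R}}_+^n:\sum_kb_k=1\}$. *)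

theory Defs
  imports "HOL-Analysis.Analysis"
begin

definition usc :: "('a::topological_space \<Rightarrow> ereal) \<Rightarrow> bool" where
  "usc u \<longleftrightarrow> (\<forall>c::ereal. open {x. u x < c})"

definition circle_mean :: "(complex \<Rightarrow> ereal) \<Rightarrow> complex \<Rightarrow> real \<Rightarrow> ereal" where
  "circle_mean u z r =
     (enn2ereal (\<integral>\<^sup>+ \<theta>\<in>{0..2*pi}. e2ennreal (max (u (z + of_real r * cis \<theta>)) 0) \<partial>lborel)
      - enn2ereal (\<integral>\<^sup>+ \<theta>\<in>{0..2*pi}. e2ennreal (max (- u (z + of_real r * cis \<theta>)) 0) \<partial>lborel))
     / ereal (2 * pi)"

definition subharmonic :: "(complex \<Rightarrow> ereal) \<Rightarrow> bool" where
  "subharmonic u \<longleftrightarrow> (\<forall>z. u z \<noteq> \<infinity>) \<and> usc u \<and>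
     (\<forall>z r. r > 0 \<longrightarrow> u z \<le> circle_mean u z r)"

definition plurisubharmonic :: "(complex^'n \<Rightarrow> ereal) \<Rightarrow> bool" where
  "plurisubharmonic u \<longleftrightarrow> (\<forall>z. u z \<noteq> \<infinity>) \<and> usc u \<and>
     (\<forall>a b. subharmonic (\<lambda>w. u (a + w *s b)))"

definition LPSH_star :: "(complex^'n \<Rightarrow> ereal) \<Rightarrow> bool" where
  "LPSH_star u \<longleftrightarrow> plurisubharmonic u \<and>
     Limsup at_infinity (\<lambda>z. u z / ereal (ln (norm z))) < \<infinity> \<and>
     (u \<longlongrightarrow> \<infinity>) at_infinity"

definition is_indicator :: "(complex^'n \<Rightarrow> ereal) \<Rightarrow> bool" where
  "is_indicator \<Psi> \<longleftrightarrow> plurisubharmonic \<Psi> \<and>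
     (\<forall>z. \<Psi> z = \<Psi> (\<chi> k. complex_of_real (norm (z $ k)))) \<and>
     (\<forall>z (c::real). c > 0 \<longrightarrow>
        \<Psi> (\<chi> k. complex_of_real (norm (z $ k) powr c)) = ereal c * \<Psi> z)"

definition supp_fun :: "(real^'n) set \<Rightarrow> real^'n \<Rightarrow> ereal" where
  "supp_fun \<Gamma> t = (SUP a\<in>\<Gamma>. ereal (a \<bullet> t))"

definition lower_set :: "(real^'n) set \<Rightarrow> bool" where
  "lower_set \<Gamma> \<longleftrightarrow> compact \<Gamma> \<and> convex \<Gamma> \<and> (\<forall>a\<in>\<Gamma>. \<forall>k. a $ k \<ge> 0) \<and>
     (\<forall>a\<in>\<Gamma>. \<forall>b. (\<forall>k. 0 < b $ k \<and> b $ k < a $ k) \<longrightarrow> b \<in> \<Gamma>)"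

definition H1 :: "(real^'n) set" where
  "H1 = {t. (\<Sum>k\<in>UNIV. t $ k) = 1}"

definition Sigma1 :: "(real^'n) set" where
  "Sigma1 = {b. (\<forall>k. b $ k \<ge> 0) \<and> (\<Sum>k\<in>UNIV. b $ k) = 1}"

end

theory Submission
  imports Defs
begin

text \<open>Only the hypothesis that \<open>max \<psi> 0\<close> is the supporting function \<open>h\<^sub>\<Gamma>\<close> of a
  lower set enters the argument. As \<open>\<Sigma>\<^sub>1 \<subseteq> H\<^sub>1\<close>, one inequality is trivial. For the other,
  suppose \<open>h\<^sub>\<Gamma> > c > 0\<close> on \<open>\<Sigma>\<^sub>1\<close>. If the diagonal point \<open>(c,\<dots>,c)\<close> were not in \<open>\<Gamma>\<close>,
  then, \<open>\<Gamma>\<close> being a lower set, it would miss the open orthant \<open>{x. \<forall>k. x\<^sub>k > c}\<close>;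
  the normal of a separating hyperplane is nonnegative because the orthant is unbounded
  upwards, and normalised to lie in \<open>\<Sigma>\<^sub>1\<close> it gives a point \<open>s\<close> with \<open>h\<^sub>\<Gamma>(s) \<le> c\<close>.
  Hence \<open>(c,\<dots>,c) \<in> \<Gamma>\<close>, and every \<open>t \<in> H\<^sub>1\<close> satisfies \<open>h\<^sub>\<Gamma>(t) \<ge> \<langle>(c,\<dots>,c), t\<rangle> = c\<close>.\<close>

lemma inner_const_vec: "w \<bullet> (\<chi> k. d) = d * (\<Sum>k\<in>UNIV. w $ k)" for w :: "real^'n"
  by (simp add: inner_vec_def sum_distrib_left mult.commute)

lemma nonneg_if_ray_bounded_below:
  fixes a b \<beta> :: real
  assumes "\<And>r. 0 \<le> r \<Longrightarrow> \<beta> \<le> a + r * b"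
  shows "0 \<le> b"
proof (rule ccontr)
  assume "\<not> 0 \<le> b"
  moreover have "\<beta> \<le> a" using assms[of 0] by simp
  ultimately have "0 \<le> (a - \<beta> + 1) / - b" and "a + ((a - \<beta> + 1) / - b) * b < \<beta>"
    by (simp_all add: field_simps)
  with assms show False by (meson not_le)
qed

lemma inner_bounded_below_on_orthant:
  fixes w :: "real^'n"
  assumes bound: "\<And>x. (\<forall>k. c < x $ k) \<Longrightarrow> \<beta> \<le> w \<bullet> x"
  shows "\<forall>k. 0 \<le> w $ k"
    and "\<beta> \<le> c * (\<Sum>k\<in>UNIV. w $ k)"
proof -
  define S where "S = (\<Sum>k\<in>UNIV. w $ k)"
  show nonneg: "\<forall>k. 0 \<le> w $ k"
  proof
    fix k
    have "\<beta> \<le> (c + 1) * S + r * w $ k" if "0 \<le> r" for r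
    proof -
      have "\<beta> \<le> w \<bullet> ((\<chi> j. c + 1) + r *\<^sub>R axis k 1)"
        using that by (intro bound) (simp add: axis_def)
      also have "\<dots> = (c + 1) * S + r * w $ k"
        by (simp add: inner_add_right inner_const_vec inner_axis S_def)
      finally show ?thesis .
    qed
    then show "0 \<le> w $ k" by (rule nonneg_if_ray_bounded_below)
  qed
  have "S \<ge> 0" unfolding S_def using nonneg by (simp add: sum_nonneg)
  show "\<beta> \<le> c * S"
  proof (rule field_le_epsilon)
    fix e :: real assume "0 < e"
    have "\<beta> \<le> w \<bullet> (\<chi> k. c + e / (S + 1))"
      using \<open>0 < e\<close> \<open>S \<ge> 0\<close> by (intro bound) simp
    also have "\<dots> = c * S + e * (S / (S + 1))"
      by (simp add: inner_const_vec S_def algebra_simps)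
    also have "\<dots> \<le> c * S + e"
      using \<open>0 < e\<close> \<open>S \<ge> 0\<close> by (simp add: field_simps)
    finally show "\<beta> \<le> c * S + e" .
  qed
qed

lemma separate_from_orthant_by_simplex:
  fixes \<Gamma> :: "(real^'n) set"
  assumes "convex \<Gamma>" and "\<Gamma> \<noteq> {}" and disjoint: "\<Gamma> \<inter> {x. \<forall>k. c < x $ k} = {}"
  obtains s where "s \<in> Sigma1" and "\<And>a. a \<in> \<Gamma> \<Longrightarrow> a \<bullet> s \<le> c"
proof -
  have "convex {x::real^'n. \<forall>k. c < x $ k}"
    by (rule convex_box_cart) (simp add: greaterThan_def[symmetric])
  moreover have "(\<chi> k. c + 1) \<in> {x::real^'n. \<forall>k. c < x $ k}" by simp
  ultimately obtain w \<beta> where "w \<noteq> 0" and below: "\<And>a. a \<in> \<Gamma> \<Longrightarrow> w \<bullet> a \<le> \<beta>"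
    and above: "\<And>x. \<forall>k. c < x $ k \<Longrightarrow> \<beta> \<le> w \<bullet> x"
    using separating_hyperplane_sets[OF \<open>convex \<Gamma>\<close> _ \<open>\<Gamma> \<noteq> {}\<close> _ disjoint] by blast
  define S where "S = (\<Sum>k\<in>UNIV. w $ k)"
  have nonneg: "\<forall>k. 0 \<le> w $ k" and "\<beta> \<le> c * S"
    using inner_bounded_below_on_orthant[OF above] by (simp_all add: S_def)
  have "S \<noteq> 0"
  proof
    assume "S = 0"
    then have "w = 0" using nonneg by (simp add: S_def sum_nonneg_eq_0_iff vec_eq_iff)
    with \<open>w \<noteq> 0\<close> show False ..
  qed
  with nonneg have "S > 0" by (simp add: S_def order.not_eq_order_implies_strict sum_nonneg)
  show ?thesis
  proof
    show "w /\<^sub>R S \<in> Sigma1"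
      using nonneg \<open>S > 0\<close> by (simp add: Sigma1_def S_def sum_distrib_left[symmetric])
    show "a \<bullet> (w /\<^sub>R S) \<le> c" if "a \<in> \<Gamma>" for a
      using below[OF that] \<open>\<beta> \<le> c * S\<close> \<open>S > 0\<close> by (simp add: inner_commute field_simps)
  qed
qed

lemma diagonal_mem_if_supp_fun_gt_on_simplex:
  fixes \<Gamma> :: "(real^'n) set"
  assumes "convex \<Gamma>" and "\<Gamma> \<noteq> {}" and "0 < c"
    and lower: "\<And>a b. a \<in> \<Gamma> \<Longrightarrow> \<forall>k. 0 < b $ k \<and> b $ k < a $ k \<Longrightarrow> b \<in> \<Gamma>"
    and gt: "\<And>s. s \<in> Sigma1 \<Longrightarrow> ereal c < supp_fun \<Gamma> s"
  shows "(\<chi> k. c) \<in> \<Gamma>"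
proof (rule ccontr)
  assume "(\<chi> k. c) \<notin> \<Gamma>"
  with lower \<open>0 < c\<close> have "\<Gamma> \<inter> {x. \<forall>k. c < x $ k} = {}" by fastforce
  then obtain s where "s \<in> Sigma1" and "\<And>a. a \<in> \<Gamma> \<Longrightarrow> a \<bullet> s \<le> c"
    using separate_from_orthant_by_simplex \<open>convex \<Gamma>\<close> \<open>\<Gamma> \<noteq> {}\<close> by blast
  then have "supp_fun \<Gamma> s \<le> ereal c" by (simp add: supp_fun_def SUP_least)
  with gt[OF \<open>s \<in> Sigma1\<close>] show False by simp
qed

lemma INF_supp_fun_H1_eq_Sigma1:
  fixes \<Gamma> :: "(real^'n) set"
  assumes "convex \<Gamma>"
    and lower: "\<And>a b. a \<in> \<Gamma> \<Longrightarrow> \<forall>k. 0 < b $ k \<and> b $ k < a $ k \<Longrightarrow> b \<in> \<Gamma>"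
    and nonneg: "\<And>t. 0 \<le> supp_fun \<Gamma> t"
  shows "(INF t\<in>H1. supp_fun \<Gamma> t) = (INF t\<in>Sigma1. supp_fun \<Gamma> t)"
proof (rule antisym)
  show "(INF t\<in>H1. supp_fun \<Gamma> t) \<le> (INF t\<in>Sigma1. supp_fun \<Gamma> t)"
    by (rule INF_superset_mono) (auto simp: Sigma1_def H1_def)
  have "\<Gamma> \<noteq> {}"
    using nonneg[of 0] by (auto simp: supp_fun_def bot_ereal_def)
  show "(INF t\<in>Sigma1. supp_fun \<Gamma> t) \<le> (INF t\<in>H1. supp_fun \<Gamma> t)"
  proof (rule INF_greatest, rule dense_le)
    fix t :: "real^'n" and e assume "t \<in> H1" and "e < (INF t\<in>Sigma1. supp_fun \<Gamma> t)"
    then obtain c where "e < ereal c" and c_below: "ereal c < (INF t\<in>Sigma1. supp_fun \<Gamma> t)"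
      using ereal_dense2 by blast
    have "ereal c \<le> supp_fun \<Gamma> t"
    proof (cases "0 < c")
      case True
      have gt: "ereal c < supp_fun \<Gamma> s" if "s \<in> Sigma1" for s
        using c_below INF_lower[OF that] by (rule less_le_trans)
      have "(\<chi> k. c) \<in> \<Gamma>"
        by (rule diagonal_mem_if_supp_fun_gt_on_simplex[OF \<open>convex \<Gamma>\<close> \<open>\<Gamma> \<noteq> {}\<close> True])
          (use lower gt in blast)+
      then have "ereal ((\<chi> k. c) \<bullet> t) \<le> supp_fun \<Gamma> t"
        unfolding supp_fun_def by (rule SUP_upper)
      moreover have "(\<chi> k. c) \<bullet> t = c"
        using \<open>t \<in> H1\<close> by (simp add: H1_def inner_commute inner_const_vec)
      ultimately show ?thesis by simp
    next
      case False
      then have "ereal c \<le> 0" by simp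
      then show ?thesis using nonneg[of t] by (rule order_trans)
    qed
    with \<open>e < ereal c\<close> show "e \<le> supp_fun \<Gamma> t" by simp
  qed
qed

theorem lemma6p7:
  fixes \<Psi> :: "complex^'n \<Rightarrow> ereal" and \<psi> :: "real^'n \<Rightarrow> ereal"
  assumes "LPSH_star \<Psi>" and "is_indicator \<Psi>"
    and "\<And>t. \<psi> t = \<Psi> (\<chi> k. complex_of_real (exp (t $ k)))"
    and "\<exists>\<Gamma>. lower_set \<Gamma> \<and> (\<forall>t. max (\<psi> t) 0 = supp_fun \<Gamma> t)"
  shows "(INF t\<in>H1. max (\<psi> t) 0) = (INF t\<in>Sigma1. max (\<psi> t) 0)"
proof -
  obtain \<Gamma> where "lower_set \<Gamma>" and supp: "\<And>t. max (\<psi> t) 0 = supp_fun \<Gamma> t"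
    using assms(4) by blast
  have "(INF t\<in>H1. supp_fun \<Gamma> t) = (INF t\<in>Sigma1. supp_fun \<Gamma> t)"
  proof (rule INF_supp_fun_H1_eq_Sigma1)
    show "convex \<Gamma>" and "\<And>a b. a \<in> \<Gamma> \<Longrightarrow> \<forall>k. 0 < b $ k \<and> b $ k < a $ k \<Longrightarrow> b \<in> \<Gamma>"
      using \<open>lower_set \<Gamma>\<close> by (auto simp: lower_set_def)
    show "0 \<le> supp_fun \<Gamma> t" for t
      by (simp flip: supp)
  qed
  then show ?thesis by (simp add: supp)
qed

end
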